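(* Let $b\in\Gamma^{*,\infty}_{A_p,\rho}(\mathbb R^{2d})$ be hypoelliptic, with hypoellipticity conditions (i) and (ii) holding with a constant $B$. Then for every $h>0$ there exists $C>0$ (resp. there exist $h,C>0$) such that $$|D^\alpha_w(b(w))^n|\le C2^nh^{|\alpha|}A_\alpha\langle w\rangle^{-\rho|\alpha|}|b(w)|^n$$ for all $\alpha\in\mathbb N^{2d}$, $n\in\mathbb N$, $w\in Q^c_B$. If the hypoellipticity conditions hold on all of $\mathbb R^{2d}$ (i.e. $B=0$), the estimate holds for all $w\in\mathbb R^{2d}$.
   Context: Notation: $\mathbb N=\{0,1,\dots\}$, $\langle x\rangle=(1+|x|^2)^{1/2}$, $D^\alpha=i^{-|\alpha|}\partial^\alpha$, $w=(x,\xi)\in\mathbb R^{2d}$. Sequences $M_p,A_p$ positive with $M_0=M_1=A_0=A_1=1$; (M.1) $N_p^2\le N_{p-1}N_{p+1}$; (M.2) $N_p\le c_0H^p\min_{q\le p}N_{p-q}N_q$; (M.3) $\sum_{p>q}N_{p-1}/N_p\le c_0qN_q/N_{q+1}$; (M.3)' $\sum N_{p-1}/N_p<\infty$; (M.4) $N_p^2/p!^2\le(N_{p-1}/(p-1)!)(N_{p+1}/(p+1)!)$. Standing: $M_p$ satisfies (M.1),(M.2),(M.3); $A_p$ satisfies (M.1),(M.2),(M.3)',(M.4); $A_p\le cL^pM_p$; $\rho$ with $\rho_0\le\rho\le1$ (strict if inf not attained), $\rho_0=\inf\{r>0:\exists c,L,\ A_p\le cL^pM_p^r\}$. $A_\alpha=A_{|\alpha|}$,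 $M(\lambda)=\sup_p\ln_+(\lambda^p/M_p)$. $*$: Beurling $(M_p)$ or Roumieu $\{M_p\}$; "(resp. ...)" refers to Roumieu. $\Gamma^{(M_p),\infty}_{A_p,\rho}(\mathbb R^{2d})=\varinjlim_{m\to\infty}\varprojlim_{h\to0}$, $\Gamma^{\{M_p\},\infty}_{A_p,\rho}(\mathbb R^{2d})=\varinjlim_{h\to\infty}\varprojlim_{m\to0}$ of Banach spaces of $a\in C^\infty(\mathbb R^{2d})$ with finite $\sup|D^\alpha_\xi D^\beta_xa|\langle w\rangle^{\rho(|\alpha|+|\beta|)}e^{-M(m|\xi|)-M(m|x|)}/(h^{|\alpha|+|\beta|}A_\alpha A_\beta)$. $Q_t=\{(x,\xi):\langle x\rangle<t,\langle\xi\rangle<t\}$. Hypoellipticity with constant $B$: (i) there are $c,m>0$ (resp. for every $m>0$ there is $c>0$) with $|b(x,\xi)|\ge ce^{-M(m|x|)-M(m|\xi|)}$ on $Q^c_B$; (ii) for every $h>0$ there is $C$ (resp. there are $h,C$) with $|D^\alpha_\xi D^\beta_xb|\le Ch^{|\alpha|+|\beta|}|b|A_\alpha A_\beta\langle w\rangle^{-\rho(|\alpha|+|\beta|)}$ on $Q^c_B$. *)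

theory Defs
  imports "HOL-Analysis.Analysis"
begin

text \<open>Beurling (M_p) versus Roumieu {M_p} setting.\<close>
datatype ultra = Beurling | Roumieu

definition cond_M1 :: "(nat \<Rightarrow> real) \<Rightarrow> bool" where
  "cond_M1 N \<longleftrightarrow> (\<forall>p\<ge>1. N p ^ 2 \<le> N (p - 1) * N (p + 1))"

definition cond_M2 :: "(nat \<Rightarrow> real) \<Rightarrow> bool" where
  "cond_M2 N \<longleftrightarrow> (\<exists>c0 H. \<forall>p. \<forall>q\<le>p. N p \<le> c0 * H ^ p * (N (p - q) * N q))"

text \<open>(M.3): for q >= 1, sum over p > q of N_(p-1)/N_p (p = k+q+1).\<close>
definition cond_M3 :: "(nat \<Rightarrow> real) \<Rightarrow> bool" where
  "cond_M3 N \<longleftrightarrow> (\<exists>c0. \<forall>q\<ge>1.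
      summable (\<lambda>k. N (k + q) / N (k + q + 1)) \<and>
      (\<Sum>k. N (k + q) / N (k + q + 1)) \<le> c0 * real q * N q / N (q + 1))"

text \<open>(M.3)': sum over p >= 1 of N_(p-1)/N_p converges.\<close>
definition cond_M3' :: "(nat \<Rightarrow> real) \<Rightarrow> bool" where
  "cond_M3' N \<longleftrightarrow> summable (\<lambda>k. N k / N (k + 1))"

definition cond_M4 :: "(nat \<Rightarrow> real) \<Rightarrow> bool" where
  "cond_M4 N \<longleftrightarrow> (\<forall>p\<ge>1. (N p / fact p) ^ 2 \<le>
      (N (p - 1) / fact (p - 1)) * (N (p + 1) / fact (p + 1)))"

definition assoc_fun :: "(nat \<Rightarrow> real) \<Rightarrow> real \<Rightarrow> real" where
  "assoc_fun N lam = (SUP p. max 0 (ln (lam ^ p / N p)))"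

definition rho_set :: "(nat \<Rightarrow> real) \<Rightarrow> (nat \<Rightarrow> real) \<Rightarrow> real set" where
  "rho_set M A = {r. r > 0 \<and> (\<exists>c L. \<forall>p. A p \<le> c * L ^ p * M p powr r)}"

definition rho0 :: "(nat \<Rightarrow> real) \<Rightarrow> (nat \<Rightarrow> real) \<Rightarrow> real" where
  "rho0 M A = Inf (rho_set M A)"

definition standing :: "(nat \<Rightarrow> real) \<Rightarrow> (nat \<Rightarrow> real) \<Rightarrow> real \<Rightarrow> bool" where
  "standing M A \<rho> \<longleftrightarrow>
     (\<forall>p. M p > 0) \<and> M 0 = 1 \<and> M 1 = 1 \<and>
     (\<forall>p. A p > 0) \<and> A 0 = 1 \<and> A 1 = 1 \<and>
     cond_M1 M \<and> cond_M2 M \<and> cond_M3 M \<and>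
     cond_M1 A \<and> cond_M2 A \<and> cond_M3' A \<and> cond_M4 A \<and>
     (\<exists>c L. \<forall>p. A p \<le> c * L ^ p * M p) \<and>
     rho0 M A \<le> \<rho> \<and> \<rho> \<le> 1 \<and>
     (rho0 M A \<notin> rho_set M A \<longrightarrow> rho0 M A < \<rho>)"

section \<open>Phase space R^{2d} = R^d x R^d, w = (x, xi)\<close>

definition jb :: "'a::real_normed_vector \<Rightarrow> real" where
  "jb v = sqrt (1 + norm v ^ 2)"

definition dirvec :: "('d::finite + 'd) \<Rightarrow> (real^'d) \<times> (real^'d)" where
  "dirvec j = (case j of Inl i \<Rightarrow> (axis i 1, 0) | Inr i \<Rightarrow> (0, axis i 1))"

definition pd :: "('d::finite + 'd) \<Rightarrow> ((real^'d) \<times> (real^'d) \<Rightarrow> complex)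
                  \<Rightarrow> (real^'d) \<times> (real^'d) \<Rightarrow> complex" where
  "pd j f w = vector_derivative (\<lambda>t. f (w + t *\<^sub>R dirvec j)) (at 0)"

fun dlist :: "('d::finite + 'd) list \<Rightarrow> ((real^'d) \<times> (real^'d) \<Rightarrow> complex)
               \<Rightarrow> (real^'d) \<times> (real^'d) \<Rightarrow> complex" where
  "dlist [] f = f"
| "dlist (j # js) f = pd j (dlist js f)"

definition smooth :: "((real^'d::finite) \<times> (real^'d) \<Rightarrow> complex) \<Rightarrow> bool" where
  "smooth f \<longleftrightarrow> (\<forall>js :: ('d + 'd) list. dlist js f differentiable_on UNIV)"

definition mabs :: "('i::finite \<Rightarrow> nat) \<Rightarrow> nat" where
  "mabs \<gamma> = (\<Sum>i\<in>UNIV. \<gamma> i)"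

definition dirs :: "('i::finite \<Rightarrow> nat) \<Rightarrow> 'i list" where
  "dirs \<gamma> = (SOME js. \<forall>i. count (mset js) i = \<gamma> i)"

definition Dm :: "(('d::finite + 'd) \<Rightarrow> nat) \<Rightarrow> ((real^'d) \<times> (real^'d) \<Rightarrow> complex)
                  \<Rightarrow> (real^'d) \<times> (real^'d) \<Rightarrow> complex" where
  "Dm \<gamma> f w = inverse (\<i> ^ mabs \<gamma>) * dlist (dirs \<gamma>) f w"

text \<open>D^alpha_xi D^beta_x corresponds to the multi-index case_sum beta alpha.\<close>

definition Gamma_bound :: "(nat \<Rightarrow> real) \<Rightarrow> (nat \<Rightarrow> real) \<Rightarrow> real \<Rightarrow> real \<Rightarrow> real
                           \<Rightarrow> ((real^'d::finite) \<times> (real^'d) \<Rightarrow> complex) \<Rightarrow> bool" where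
  "Gamma_bound M A \<rho> m h a \<longleftrightarrow> (\<exists>C. \<forall>(\<alpha>::'d \<Rightarrow> nat) (\<beta>::'d \<Rightarrow> nat) w.
      norm (Dm (case_sum \<beta> \<alpha>) a w) \<le>
        C * h ^ (mabs \<alpha> + mabs \<beta>) * A (mabs \<alpha>) * A (mabs \<beta>)
          * jb w powr (- \<rho> * real (mabs \<alpha> + mabs \<beta>))
          * exp (assoc_fun M (m * norm (snd w)) + assoc_fun M (m * norm (fst w))))"

definition Gamma_space :: "ultra \<Rightarrow> (nat \<Rightarrow> real) \<Rightarrow> (nat \<Rightarrow> real) \<Rightarrow> real
                           \<Rightarrow> ((real^'d::finite) \<times> (real^'d) \<Rightarrow> complex) \<Rightarrow> bool" where
  "Gamma_space u M A \<rho> a \<longleftrightarrow> smooth a \<and>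
     (case u of
        Beurling \<Rightarrow> (\<exists>m>0. \<forall>h>0. Gamma_bound M A \<rho> m h a)
      | Roumieu \<Rightarrow> (\<exists>h>0. \<forall>m>0. Gamma_bound M A \<rho> m h a))"

definition Qset :: "real \<Rightarrow> ((real^'d::finite) \<times> (real^'d)) set" where
  "Qset t = {w. jb (fst w) < t \<and> jb (snd w) < t}"

definition hypo_i :: "ultra \<Rightarrow> (nat \<Rightarrow> real) \<Rightarrow> real
                      \<Rightarrow> ((real^'d::finite) \<times> (real^'d) \<Rightarrow> complex) \<Rightarrow> bool" where
  "hypo_i u M B b \<longleftrightarrow>
     (let est = (\<lambda>c m. \<forall>w. w \<notin> Qset B \<longrightarrow>
                 norm (b w) \<ge> c * exp (- assoc_fun M (m * norm (fst w)) - assoc_fun M (m * norm (snd w))))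
      in case u of
           Beurling \<Rightarrow> (\<exists>c>0. \<exists>m>0. est c m)
         | Roumieu \<Rightarrow> (\<forall>m>0. \<exists>c>0. est c m))"

definition hypo_ii :: "ultra \<Rightarrow> (nat \<Rightarrow> real) \<Rightarrow> real \<Rightarrow> real
                      \<Rightarrow> ((real^'d::finite) \<times> (real^'d) \<Rightarrow> complex) \<Rightarrow> bool" where
  "hypo_ii u A \<rho> B b \<longleftrightarrow>
     (let est = (\<lambda>h C. \<forall>(\<alpha>::'d \<Rightarrow> nat) (\<beta>::'d \<Rightarrow> nat) w. w \<notin> Qset B \<longrightarrow>
                 norm (Dm (case_sum \<beta> \<alpha>) b w) \<le>
                   C * h ^ (mabs \<alpha> + mabs \<beta>) * norm (b w) * A (mabs \<alpha>) * A (mabs \<beta>)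
                     * jb w powr (- \<rho> * real (mabs \<alpha> + mabs \<beta>)))
      in case u of
           Beurling \<Rightarrow> (\<forall>h>0. \<exists>C. est h C)
         | Roumieu \<Rightarrow> (\<exists>h>0. \<exists>C. est h C))"

definition hypoelliptic :: "ultra \<Rightarrow> (nat \<Rightarrow> real) \<Rightarrow> (nat \<Rightarrow> real) \<Rightarrow> real \<Rightarrow> real
                      \<Rightarrow> ((real^'d::finite) \<times> (real^'d) \<Rightarrow> complex) \<Rightarrow> bool" where
  "hypoelliptic u M A \<rho> B b \<longleftrightarrow> hypo_i u M B b \<and> hypo_ii u A \<rho> B b"

end

theory Submission
  imports Defs
begin

text \<open>By Leibniz's rule, a derivative of order \<open>k\<close> of \<open>b^n\<close> is a sum over the ways of
  distributing the \<open>k\<close> differentiations among the \<open>n\<close> factors. Bounding every derivative of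
  \<open>b\<close> by hypothesis (ii) reduces the claim to a bound for the \<open>n\<close>-th binomial convolution
  power of the sequence \<open>G 0 = 1\<close>, \<open>G j = c h^j A j\<close>. Write \<open>A j = j! a j\<close>; by (M.4) the
  sequence \<open>a\<close> is log-convex with \<open>a 0 = a 1 = 1\<close>, so the terms in which exactly \<open>m\<close> factors
  are differentiated contribute at most \<open>(n choose m) 2^k h^k A k c^m / a m\<close>. By (M.3)' the
  ratios \<open>a (m + 1) / a m\<close> are unbounded, hence \<open>c^m \<le> K a m\<close>, and summing over \<open>m\<close> gives
  the factor \<open>K 2^n\<close>. Hypothesis (ii) controls derivatives taken in one fixed order only,
  while Leibniz's rule produces them in every order; Schwarz's theorem bridges the gap.\<close>

section \<open>Directional derivatives and Schwarz's theorem\<close>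

definition dir_deriv :: "'a::real_normed_vector \<Rightarrow> ('a \<Rightarrow> 'b::real_normed_vector) \<Rightarrow> 'a \<Rightarrow> 'b" where
  "dir_deriv d g x = vector_derivative (\<lambda>t. g (x + t *\<^sub>R d)) (at 0)"

lemma has_vector_derivative_line_frechet:
  assumes "g differentiable at (x + r *\<^sub>R d)"
  shows "((\<lambda>s. g (x + s *\<^sub>R d)) has_vector_derivative frechet_derivative g (at (x + r *\<^sub>R d)) d) (at r)"
proof -
  let ?g' = "frechet_derivative g (at (x + r *\<^sub>R d))"
  have g: "(g has_derivative ?g') (at (x + r *\<^sub>R d))"
    using assms frechet_derivative_works by blast
  have "((\<lambda>s. x + s *\<^sub>R d) has_derivative (\<lambda>h. h *\<^sub>R d)) (at r)"
    by (auto intro!: derivative_eq_intros)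
  from has_derivative_compose[OF this g]
  have "((\<lambda>s. g (x + s *\<^sub>R d)) has_derivative (\<lambda>h. ?g' (h *\<^sub>R d))) (at r)" .
  moreover have "(\<lambda>h. ?g' (h *\<^sub>R d)) = (\<lambda>h. h *\<^sub>R ?g' d)"
    using has_derivative_linear[OF g] by (simp add: linear_scale)
  ultimately show ?thesis by (simp add: has_vector_derivative_def)
qed

lemma dir_deriv_eq_frechet:
  "g differentiable at y \<Longrightarrow> dir_deriv d g y = frechet_derivative g (at y) d"
  using has_vector_derivative_line_frechet[of g y 0 d] unfolding dir_deriv_def
  by (simp add: vector_derivative_at)

lemma has_vector_derivative_line:
  assumes "g differentiable at (x + r *\<^sub>R d)"
  shows "((\<lambda>s. g (x + s *\<^sub>R d)) has_vector_derivative dir_deriv d g (x + r *\<^sub>R d)) (at r)"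
  using has_vector_derivative_line_frechet[OF assms] dir_deriv_eq_frechet[OF assms] by simp

lemma differentiable_line:
  "g differentiable at x \<Longrightarrow> (\<lambda>t. g (x + t *\<^sub>R d)) differentiable at 0"
  using has_vector_derivative_line[of g x 0 d] by (auto intro: differentiableI_vector)

lemma dir_deriv_add:
  "f differentiable at x \<Longrightarrow> g differentiable at x \<Longrightarrow>
     dir_deriv d (\<lambda>y. f y + g y) x = dir_deriv d f x + dir_deriv d g x"
  unfolding dir_deriv_def by (simp add: differentiable_line)

lemma dir_deriv_mult:
  fixes f g :: "'a::real_normed_vector \<Rightarrow> 'b::real_normed_algebra"
  shows "f differentiable at x \<Longrightarrow> g differentiable at x \<Longrightarrow>
     dir_deriv d (\<lambda>y. f y * g y) x = f x * dir_deriv d g x + dir_deriv d f x * g x"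
  unfolding dir_deriv_def by (simp add: differentiable_line)

lemma dir_deriv_const: "dir_deriv d (\<lambda>y. c) x = 0"
  unfolding dir_deriv_def by simp

lemma norm_diff_le_segment:
  fixes g :: "real \<Rightarrow> 'b::real_normed_vector"
  assumes "\<And>r. r \<in> closed_segment 0 t \<Longrightarrow> (g has_vector_derivative g' r) (at r)"
    and "\<And>r. r \<in> closed_segment 0 t \<Longrightarrow> norm (g' r) \<le> B"
  shows "norm (g t - g 0) \<le> B * \<bar>t\<bar>"
proof -
  have "norm (g t - g 0) \<le> B * norm (t - 0)"
  proof (rule differentiable_bound[where S="closed_segment 0 t" and f'="\<lambda>r h. h *\<^sub>R g' r"])
    fix x assume x: "x \<in> closed_segment 0 t"
    show "(g has_derivative (\<lambda>h. h *\<^sub>R g' x)) (at x within closed_segment 0 t)"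
      using assms(1)[OF x] by (auto simp: has_vector_derivative_def intro: has_derivative_at_withinI)
    have "onorm (\<lambda>h::real. h *\<^sub>R g' x) = onorm (\<lambda>h::real. h) * norm (g' x)"
      by (rule onorm_scaleR_left) (rule bounded_linear_ident)
    then show "onorm (\<lambda>h::real. h *\<^sub>R g' x) \<le> B" using assms(2)[OF x] by (simp add: onorm_id)
  qed auto
  then show ?thesis by simp
qed

lemma abs_le_of_closed_segment: "(r::real) \<in> closed_segment 0 t \<Longrightarrow> \<bar>r\<bar> \<le> \<bar>t\<bar>"
  by (auto simp: closed_segment_eq_real_ivl split: if_splits)

definition second_diff :: "('a::real_normed_vector \<Rightarrow> 'b::real_normed_vector) \<Rightarrow> 'a \<Rightarrow> 'a \<Rightarrow> 'a \<Rightarrow> real \<Rightarrow> 'b" where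
  "second_diff f w u v t = f (w + t *\<^sub>R u + t *\<^sub>R v) - f (w + t *\<^sub>R u) - f (w + t *\<^sub>R v) + f w"

lemma second_diff_commute: "second_diff f w u v = second_diff f w v u"
  by (simp add: fun_eq_iff second_diff_def algebra_simps)

lemma second_diff_estimate:
  fixes f :: "'a::real_normed_vector \<Rightarrow> 'b::real_normed_vector"
  assumes f: "\<And>x. f differentiable at x"
    and df: "\<And>x. dir_deriv u f differentiable at x"
    and close: "\<And>p q. \<bar>p\<bar> \<le> \<bar>t\<bar> \<Longrightarrow> \<bar>q\<bar> \<le> \<bar>t\<bar> \<Longrightarrow>
                  norm (dir_deriv v (dir_deriv u f) (w + p *\<^sub>R u + q *\<^sub>R v) - c) \<le> e"
  shows "norm (second_diff f w u v t - t\<^sup>2 *\<^sub>R c) \<le> e * t\<^sup>2"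
proof -
  let ?Q = "dir_deriv u f"
  have inner: "norm (?Q (w + s *\<^sub>R u + t *\<^sub>R v) - ?Q (w + s *\<^sub>R u) - t *\<^sub>R c) \<le> e * \<bar>t\<bar>"
    if s: "s \<in> closed_segment 0 t" for s
  proof -
    let ?g = "\<lambda>r. ?Q (w + s *\<^sub>R u + r *\<^sub>R v) - r *\<^sub>R c"
    have "norm (?g t - ?g 0) \<le> e * \<bar>t\<bar>"
    proof (rule norm_diff_le_segment[where g'="\<lambda>r. dir_deriv v ?Q (w + s *\<^sub>R u + r *\<^sub>R v) - c"])
      fix r assume r: "r \<in> closed_segment 0 t"
      show "(?g has_vector_derivative dir_deriv v ?Q (w + s *\<^sub>R u + r *\<^sub>R v) - c) (at r)"
        by (intro has_vector_derivative_diff has_vector_derivative_line)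
           (auto simp: df intro!: derivative_eq_intros)
      show "norm (dir_deriv v ?Q (w + s *\<^sub>R u + r *\<^sub>R v) - c) \<le> e"
        using close abs_le_of_closed_segment[OF s] abs_le_of_closed_segment[OF r] by blast
    qed
    then show ?thesis by (simp add: algebra_simps)
  qed
  let ?g = "\<lambda>s. f ((w + t *\<^sub>R v) + s *\<^sub>R u) - f (w + s *\<^sub>R u) - s *\<^sub>R (t *\<^sub>R c)"
  have "norm (?g t - ?g 0) \<le> (e * \<bar>t\<bar>) * \<bar>t\<bar>"
  proof (rule norm_diff_le_segment[where g'="\<lambda>s. ?Q ((w + t *\<^sub>R v) + s *\<^sub>R u) - ?Q (w + s *\<^sub>R u) - t *\<^sub>R c"])
    fix s assume s: "s \<in> closed_segment 0 t"
    show "(?g has_vector_derivative ?Q (w + t *\<^sub>R v + s *\<^sub>R u) - ?Q (w + s *\<^sub>R u) - t *\<^sub>R c) (at s)"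
      by (intro has_vector_derivative_diff has_vector_derivative_line)
         (auto simp: f intro!: derivative_eq_intros)
    have "w + t *\<^sub>R v + s *\<^sub>R u = w + s *\<^sub>R u + t *\<^sub>R v" by (simp add: algebra_simps)
    then show "norm (?Q (w + t *\<^sub>R v + s *\<^sub>R u) - ?Q (w + s *\<^sub>R u) - t *\<^sub>R c) \<le> e * \<bar>t\<bar>"
      using inner[OF s] by metis
  qed
  then show ?thesis by (simp add: second_diff_def algebra_simps power2_eq_square)
qed

lemma second_diff_quotient_tendsto:
  fixes f :: "'a::real_normed_vector \<Rightarrow> 'b::real_normed_vector"
  assumes f: "\<And>x. f differentiable at x"
    and df: "\<And>x. dir_deriv u f differentiable at x"
    and cont: "continuous (at w) (dir_deriv v (dir_deriv u f))"
  shows "((\<lambda>t. (1 / t\<^sup>2) *\<^sub>R second_diff f w u v t) \<longlongrightarrow> dir_deriv v (dir_deriv u f) w) (at 0)"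
proof (rule tendstoI)
  fix e :: real assume e: "e > 0"
  let ?R = "dir_deriv v (dir_deriv u f)"
  obtain \<delta> where \<delta>: "\<delta> > 0" and near: "\<And>x. dist x w < \<delta> \<Longrightarrow> dist (?R x) (?R w) < e / 2"
    using cont e unfolding continuous_at_eps_delta by (meson half_gt_zero)
  define s where "s = \<delta> / (norm u + norm v + 1)"
  have nuv: "norm u + norm v + 1 > 0" by (smt (verit) norm_ge_zero)
  have "s > 0" using \<delta> nuv by (simp add: s_def)
  show "\<forall>\<^sub>F t in at 0. dist ((1 / t\<^sup>2) *\<^sub>R second_diff f w u v t) (?R w) < e"
    unfolding eventually_at
  proof (intro exI conjI ballI impI)
    show "s > 0" by fact
    fix t :: real assume t: "t \<noteq> 0 \<and> dist t 0 < s"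
    have "norm (?R (w + p *\<^sub>R u + q *\<^sub>R v) - ?R w) \<le> e / 2"
      if "\<bar>p\<bar> \<le> \<bar>t\<bar>" "\<bar>q\<bar> \<le> \<bar>t\<bar>" for p q
    proof -
      have "norm (p *\<^sub>R u + q *\<^sub>R v) \<le> \<bar>t\<bar> * (norm u + norm v)"
        using that norm_triangle_le[of "p *\<^sub>R u" "q *\<^sub>R v"]
        by (simp add: distrib_left) (smt (verit) mult_right_mono norm_ge_zero)
      also have "\<dots> < \<delta>"
        using t nuv by (simp add: s_def field_simps) (smt (verit) mult_left_mono norm_ge_zero)
      finally show ?thesis using near[of "w + p *\<^sub>R u + q *\<^sub>R v"] by (simp add: dist_norm add.assoc)
    qed
    from second_diff_estimate[OF f df this]
    have est: "norm (second_diff f w u v t - t\<^sup>2 *\<^sub>R ?R w) \<le> e / 2 * t\<^sup>2" .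
    have t2: "t\<^sup>2 > 0" using t by simp
    have "dist ((1 / t\<^sup>2) *\<^sub>R second_diff f w u v t) (?R w)
        = norm ((1 / t\<^sup>2) *\<^sub>R (second_diff f w u v t - t\<^sup>2 *\<^sub>R ?R w))"
      using t2 by (simp add: dist_norm scaleR_diff_right)
    also have "\<dots> = norm (second_diff f w u v t - t\<^sup>2 *\<^sub>R ?R w) / t\<^sup>2"
      using t2 by simp
    also have "\<dots> \<le> e / 2"
      using est t2 by (simp add: divide_le_eq)
    finally show "dist ((1 / t\<^sup>2) *\<^sub>R second_diff f w u v t) (?R w) < e"
      using e by linarith
  qed
qed

text \<open>Schwarz's theorem, via the symmetry of the second difference in \<open>u\<close> and \<open>v\<close>.\<close>
lemma dir_deriv_commute:
  fixes f :: "'a::real_normed_vector \<Rightarrow> 'b::real_normed_vector"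
  assumes f: "\<And>x. f differentiable at x"
    and "\<And>x. dir_deriv u f differentiable at x" "\<And>x. dir_deriv v f differentiable at x"
    and "continuous (at w) (dir_deriv v (dir_deriv u f))"
    and "continuous (at w) (dir_deriv u (dir_deriv v f))"
  shows "dir_deriv v (dir_deriv u f) w = dir_deriv u (dir_deriv v f) w"
  using tendsto_unique[OF _ second_diff_quotient_tendsto[OF f assms(2,4)]]
    second_diff_quotient_tendsto[OF f assms(3,5)]
  by (simp add: trivial_limit_at second_diff_commute)

type_synonym 'd phase_fun = "(real^'d) \<times> (real^'d) \<Rightarrow> complex"

lemma pd_eq_dir_deriv: "pd j = dir_deriv (dirvec j)"
  by (simp add: fun_eq_iff pd_def dir_deriv_def)

lemma pd_add:
  "f differentiable at x \<Longrightarrow> g differentiable at x \<Longrightarrow> pd j (\<lambda>y. f y + g y) x = pd j f x + pd j g x"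
  by (simp add: pd_eq_dir_deriv dir_deriv_add)

lemma pd_mult:
  "f differentiable at x \<Longrightarrow> g differentiable at x \<Longrightarrow>
     pd j (\<lambda>y. f y * g y) x = f x * pd j g x + pd j f x * g x"
  by (simp add: pd_eq_dir_deriv dir_deriv_mult)

lemma pd_const: "pd j (\<lambda>y. c) = (\<lambda>y. 0)"
  by (simp add: fun_eq_iff pd_eq_dir_deriv dir_deriv_const)

lemma dlist_append: "dlist (xs @ ys) f = dlist xs (dlist ys f)"
  by (induction xs) auto

lemma smooth_dlist: "smooth f \<Longrightarrow> smooth (dlist js f)"
  unfolding smooth_def by (metis dlist_append)

lemma differentiable_dlist: "smooth f \<Longrightarrow> dlist js f differentiable at x"
  unfolding smooth_def by (meson UNIV_I differentiable_on_def)

lemma smooth_imp_differentiable: "smooth f \<Longrightarrow> f differentiable at x"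
  using differentiable_dlist[of f "[]"] by simp

lemma smooth_pd: "smooth f \<Longrightarrow> smooth (pd j f)"
  using smooth_dlist[of f "[j]"] by simp

lemma pd_commute:
  fixes f :: "'d::finite phase_fun"
  assumes "smooth f"
  shows "pd i (pd j f) = pd j (pd i f)"
proof
  fix w
  have "\<And>js x. dlist js f differentiable at x" using differentiable_dlist[OF assms] .
  from this[of "[]"] this[of "[i]"] this[of "[j]"] this[of "[j, i]" w] this[of "[i, j]" w]
  show "pd i (pd j f) w = pd j (pd i f) w"
    unfolding pd_eq_dir_deriv
    by (intro dir_deriv_commute) (auto simp: pd_eq_dir_deriv differentiable_imp_continuous_within)
qed

lemma dlist_pd_commute: "smooth f \<Longrightarrow> dlist js (pd j f) = pd j (dlist js f)"
proof (induction js)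
  case (Cons i js)
  then show ?case using pd_commute[OF smooth_dlist[OF Cons.prems], of i j js] by simp
qed simp

lemma dlist_mset_eq:
  assumes "smooth f" and "mset js = mset js'"
  shows "dlist js f = dlist js' f"
  using assms(2)
proof (induction js arbitrary: js')
  case Nil
  then show ?case by simp
next
  case (Cons j js)
  then obtain xs ys where js': "js' = xs @ j # ys"
    by (metis list.set_intros(1) set_mset_mset split_list)
  with Cons.prems have "mset js = mset (xs @ ys)" by simp
  have "dlist js' f = dlist xs (pd j (dlist ys f))" using js' by (simp add: dlist_append)
  also have "\<dots> = pd j (dlist (xs @ ys) f)"
    by (simp add: dlist_pd_commute smooth_dlist assms(1) dlist_append)
  also have "\<dots> = pd j (dlist js f)" using Cons.IH[OF \<open>mset js = mset (xs @ ys)\<close>] by simp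
  finally show ?case by simp
qed

text \<open>The head of the list is the derivative applied first, the reverse of the convention of
  \<open>dlist\<close>.\<close>
fun leibniz :: "('d::finite + 'd) list \<Rightarrow> 'd phase_fun \<Rightarrow> 'd phase_fun \<Rightarrow> 'd phase_fun" where
  "leibniz [] f g = (\<lambda>x. f x * g x)"
| "leibniz (j # js) f g = (\<lambda>x. leibniz js (pd j f) g x + leibniz js f (pd j g) x)"

lemma differentiable_leibniz:
  "smooth f \<Longrightarrow> smooth g \<Longrightarrow> leibniz js f g differentiable at x"
  by (induction js arbitrary: f g) (simp_all add: smooth_imp_differentiable smooth_pd)

lemma pd_leibniz:
  "smooth f \<Longrightarrow> smooth g \<Longrightarrow> pd k (leibniz js f g) = leibniz (js @ [k]) f g"
proof (induction js arbitrary: f g)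
  case Nil
  then show ?case by (simp add: fun_eq_iff pd_mult smooth_imp_differentiable algebra_simps)
next
  case (Cons j js)
  then show ?case by (simp add: fun_eq_iff pd_add differentiable_leibniz smooth_pd)
qed

lemma dlist_mult:
  "smooth f \<Longrightarrow> smooth g \<Longrightarrow> dlist js (\<lambda>x. f x * g x) = leibniz (rev js) f g"
  by (induction js) (simp_all add: pd_leibniz)

lemma smooth_mult:
  assumes "smooth f" "smooth g"
  shows "smooth (\<lambda>x. f x * g x)"
  unfolding smooth_def dlist_mult[OF assms]
  using differentiable_leibniz[OF assms] by (simp add: differentiable_at_imp_differentiable_on)

lemma dlist_const: "dlist js (\<lambda>x. c) = (if js = [] then (\<lambda>x. c) else (\<lambda>x. 0))"
  by (induction js) (simp_all add: pd_const)

lemma smooth_const: "smooth (\<lambda>x. c)"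
  unfolding smooth_def dlist_const by simp

lemma smooth_power: "smooth f \<Longrightarrow> smooth (\<lambda>x. f x ^ n)"
  by (induction n) (simp_all add: smooth_const smooth_mult)

lemma mabs_count_mset: "mabs (count (mset js)) = length js"
proof (induction js)
  case (Cons j js)
  have "mabs (count (mset (j # js))) = (\<Sum>i\<in>UNIV. count (mset js) i + (if i = j then 1 else 0))"
    unfolding mabs_def by (intro sum.cong) auto
  with Cons show ?case by (simp add: mabs_def sum.distrib)
qed (simp add: mabs_def)

lemma mabs_case_sum: "mabs (case_sum \<beta> \<alpha>) = mabs \<beta> + mabs \<alpha>"
proof -
  have "mabs (case_sum \<beta> \<alpha>) = sum (case_sum \<beta> \<alpha>) (range Inl \<union> range Inr)"
    unfolding mabs_def by (simp only: UNIV_sum)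
  also have "\<dots> = sum (case_sum \<beta> \<alpha>) (range Inl) + sum (case_sum \<beta> \<alpha>) (range Inr)"
    by (rule sum.union_disjoint) auto
  finally show ?thesis by (simp add: mabs_def sum.reindex)
qed

lemma count_mset_dirs: "count (mset (dirs \<gamma>)) = \<gamma>"
proof -
  obtain js where "mset js = Abs_multiset \<gamma>" using ex_mset by blast
  then have "\<forall>i. count (mset js) i = \<gamma> i" by (simp add: count_Abs_multiset)
  then have "\<forall>i. count (mset (dirs \<gamma>)) i = \<gamma> i"
    unfolding dirs_def by (rule someI)
  then show ?thesis by auto
qed

lemma length_dirs: "length (dirs \<gamma>) = mabs \<gamma>"
  by (metis count_mset_dirs mabs_count_mset)

lemma norm_Dm: "norm (Dm \<gamma> f w) = norm (dlist (dirs \<gamma>) f w)"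
  unfolding Dm_def by (simp add: norm_mult norm_inverse norm_power)

lemma norm_Dm_count_mset:
  "smooth f \<Longrightarrow> norm (Dm (count (mset js)) f w) = norm (dlist js f w)"
  using dlist_mset_eq[of f "dirs (count (mset js))" js]
  by (simp add: norm_Dm count_mset_dirs multiset_eqI)

section \<open>Binomial convolution powers\<close>

definition binom_conv :: "nat \<Rightarrow> (nat \<Rightarrow> real) \<Rightarrow> (nat \<Rightarrow> real) \<Rightarrow> real" where
  "binom_conv n F G = (\<Sum>k\<le>n. real (n choose k) * F k * G (n - k))"

lemma of_nat_choose_mult_fact: "k \<le> n \<Longrightarrow> real (n choose k) * fact k * fact (n - k) = fact n"
proof -
  assume "k \<le> n"
  then have "fact k * fact (n - k) * (n choose k) = (fact n :: nat)" by (rule binomial_fact_lemma)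
  then have "real (fact k * fact (n - k) * (n choose k)) = fact n" by (simp only: of_nat_fact)
  then show ?thesis by (simp add: ac_simps)
qed

lemma sum_Suc_choose_mult:
  fixes h :: "nat \<Rightarrow> real"
  shows "(\<Sum>k\<le>Suc n. real (Suc n choose k) * h k) =
    (\<Sum>k\<le>n. real (n choose k) * h k) + (\<Sum>k\<le>n. real (n choose k) * h (Suc k))"
proof -
  have "(\<Sum>k\<le>n. real (n choose k) * h k) = (\<Sum>k\<le>Suc n. real (n choose k) * h k)" by simp
  also have "\<dots> = h 0 + (\<Sum>k\<le>n. real (n choose Suc k) * h (Suc k))"
    by (subst sum.atMost_Suc_shift) simp
  finally have "(\<Sum>k\<le>n. real (n choose k) * h k) = h 0 + (\<Sum>k\<le>n. real (n choose Suc k) * h (Suc k))" .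
  moreover have "(\<Sum>k\<le>Suc n. real (Suc n choose k) * h k)
      = h 0 + (\<Sum>k\<le>n. real (n choose Suc k) * h (Suc k)) + (\<Sum>k\<le>n. real (n choose k) * h (Suc k))"
    by (subst sum.atMost_Suc_shift) (simp add: sum.distrib algebra_simps)
  ultimately show ?thesis by simp
qed

lemma binom_conv_Suc:
  "binom_conv (Suc n) F G = binom_conv n (\<lambda>k. F (Suc k)) G + binom_conv n F (\<lambda>k. G (Suc k))"
proof -
  have "binom_conv (Suc n) F G = (\<Sum>k\<le>n. real (n choose k) * (F k * G (Suc n - k))) +
      (\<Sum>k\<le>n. real (n choose k) * (F (Suc k) * G (Suc n - Suc k)))"
    unfolding binom_conv_def using sum_Suc_choose_mult[of n "\<lambda>k. F k * G (Suc n - k)"]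
    by (simp add: mult.assoc)
  also have "(\<Sum>k\<le>n. real (n choose k) * (F k * G (Suc n - k))) = binom_conv n F (\<lambda>k. G (Suc k))"
    unfolding binom_conv_def by (intro sum.cong) (auto simp: Suc_diff_le)
  finally show ?thesis by (simp add: binom_conv_def mult.assoc add.commute)
qed

lemma binom_conv_scale:
  "binom_conv n (\<lambda>k. x * y ^ k * F k) (\<lambda>k. z * y ^ k * G k) = x * z * y ^ n * binom_conv n F G"
  unfolding binom_conv_def sum_distrib_left
  by (intro sum.cong) (simp_all add: power_add[symmetric] ac_simps)

primrec conv_power :: "(nat \<Rightarrow> real) \<Rightarrow> nat \<Rightarrow> nat \<Rightarrow> real" where
  "conv_power F 0 k = (if k = 0 then 1 else 0)"
| "conv_power F (Suc n) k = binom_conv k F (conv_power F n)"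

lemma conv_power_scale: "conv_power (\<lambda>k. x * y ^ k * F k) n k = x ^ n * y ^ k * conv_power F n k"
proof (induction n arbitrary: k)
  case (Suc n)
  then have "conv_power (\<lambda>k. x * y ^ k * F k) n = (\<lambda>k. x ^ n * y ^ k * conv_power F n k)"
    by (simp add: fun_eq_iff)
  then show ?case using binom_conv_scale[of k x y F "x ^ n" "conv_power F n"] by simp
qed simp

lemma norm_leibniz_le:
  assumes "smooth f" "smooth g"
    and "\<And>js. norm (dlist js f x) \<le> F (length js)"
    and "\<And>js. norm (dlist js g x) \<le> G (length js)"
  shows "norm (leibniz js f g x) \<le> binom_conv (length js) F G"
  using assms
proof (induction js arbitrary: f g F G)
  case Nil
  have "norm (f x * g x) \<le> F 0 * G 0"
    using Nil.prems(3)[of "[]"] Nil.prems(4)[of "[]"] by (simp add: norm_mult mult_mono')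
  then show ?case by (simp add: binom_conv_def)
next
  case (Cons j js)
  have shift: "norm (dlist js' (pd j h) x) \<le> H (Suc (length js'))"
    if "\<And>js. norm (dlist js h x) \<le> H (length js)" for js' h H
    using that[of "js' @ [j]"] by (simp add: dlist_append)
  have "norm (leibniz js (pd j f) g x) \<le> binom_conv (length js) (\<lambda>k. F (Suc k)) G"
    using Cons by (intro Cons.IH) (simp_all add: smooth_pd shift)
  moreover have "norm (leibniz js f (pd j g) x) \<le> binom_conv (length js) F (\<lambda>k. G (Suc k))"
    using Cons by (intro Cons.IH) (simp_all add: smooth_pd shift)
  ultimately show ?case by (simp add: binom_conv_Suc norm_triangle_le add_mono)
qed

lemma norm_dlist_power_le:
  assumes "smooth f" and "\<And>js. norm (dlist js f x) \<le> F (length js)"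
  shows "norm (dlist js (\<lambda>y. f y ^ n) x) \<le> conv_power F n (length js)"
proof (induction n arbitrary: js)
  case 0
  show ?case by (simp add: dlist_const)
next
  case (Suc n)
  have "dlist js (\<lambda>y. f y ^ Suc n) = leibniz (rev js) f (\<lambda>y. f y ^ n)"
    using dlist_mult[OF assms(1) smooth_power[OF assms(1)]] by simp
  moreover have "norm (leibniz (rev js) f (\<lambda>y. f y ^ n) x) \<le> binom_conv (length js) F (conv_power F n)"
    using norm_leibniz_le[OF assms(1) smooth_power[OF assms(1)] assms(2) Suc.IH, of "rev js"] by simp
  ultimately show ?case by simp
qed

section \<open>Log-convex weight sequences\<close>

locale log_convex_weight =
  fixes a :: "nat \<Rightarrow> real"
  assumes pos: "a p > 0"
    and zero: "a 0 = 1"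
    and one: "a 1 = 1"
    and log_convex: "(a (Suc p))\<^sup>2 \<le> a p * a (Suc (Suc p))"
begin

lemma ratio_mono: "p \<le> q \<Longrightarrow> a (Suc p) / a p \<le> a (Suc q) / a q"
proof (rule lift_Suc_mono_le[of "\<lambda>p. a (Suc p) / a p"])
  fix p
  show "a (Suc p) / a p \<le> a (Suc (Suc p)) / a (Suc p)"
    using log_convex[of p] pos[of p] pos[of "Suc p"]
    by (simp add: divide_simps power2_eq_square mult.commute)
qed

lemma shift_le: "p \<le> q \<Longrightarrow> a (p + d) * a q \<le> a (q + d) * a p"
proof (induction d)
  case (Suc d)
  have "a (p + Suc d) * a q = a (Suc (p + d)) / a (p + d) * (a (p + d) * a q)"
    using pos[of "p + d"] by simp
  also have "\<dots> \<le> a (Suc (p + d)) / a (p + d) * (a (q + d) * a p)"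
    using Suc pos by (intro mult_left_mono) (auto intro: less_imp_le)
  also have "\<dots> \<le> a (Suc (q + d)) / a (q + d) * (a (q + d) * a p)"
    using Suc.prems ratio_mono[of "p + d" "q + d"] pos by (intro mult_right_mono) (auto intro: less_imp_le)
  also have "\<dots> = a (q + Suc d) * a p"
    using pos[of "q + d"] by simp
  finally show ?case .
qed simp

lemma mult_le: "a p * a q \<le> a (p + q)"
  using shift_le[of 0 q p] by (simp add: zero add.commute)

lemma mult_le_shift:
  assumes "1 \<le> j" "m + j \<le> k"
  shows "a j * a (k - j) * a (Suc m) \<le> a k * a m"
proof -
  have "a j * a (Suc m) \<le> a (m + j)"
    using shift_le[of 1 "Suc m" "j - 1"] assms one by simp
  then have "a j * a (k - j) * a (Suc m) \<le> a (m + j) * a (k - j)"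
    using pos[of "k - j"] by (simp add: mult.commute mult.left_commute mult_right_mono)
  also have "\<dots> \<le> a k * a m"
    using shift_le[of m "k - j" j] assms by simp
  finally show ?thesis .
qed

lemma ratio_unbounded:
  assumes "summable (\<lambda>k. a k / (real (Suc k) * a (Suc k)))"
  shows "\<exists>N. R < a (Suc N) / a N"
proof (rule ccontr)
  assume "\<nexists>N. R < a (Suc N) / a N"
  then have bound: "a (Suc k) / a k \<le> R" for k by (simp add: not_less)
  have harmonic_le: "inverse (real (Suc k)) \<le> R * (a k / (real (Suc k) * a (Suc k)))" for k
  proof -
    have "inverse (real (Suc k)) = a (Suc k) / a k * (a k / (real (Suc k) * a (Suc k)))"
      using pos[of k] pos[of "Suc k"] by (simp del: of_nat_Suc add: field_simps)
    also have "\<dots> \<le> R * (a k / (real (Suc k) * a (Suc k)))"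
      using bound[of k] pos[of k] pos[of "Suc k"] by (intro mult_right_mono) simp_all
    finally show ?thesis .
  qed
  have "summable (\<lambda>k. inverse (real (Suc k)))"
  proof (rule summable_comparison_test'[OF summable_mult[OF assms, of R]])
    show "norm (inverse (real (Suc k))) \<le> R * (a k / (real (Suc k) * a (Suc k)))" for k
      using harmonic_le[of k] by (simp del: of_nat_Suc)
  qed
  then show False
    using not_summable_harmonic[where 'a=real] summable_Suc_iff[of "\<lambda>n. inverse (real n) :: real"]
    by simp
qed

lemma dominates_geometric:
  assumes unbounded: "\<And>R. \<exists>N. R < a (Suc N) / a N" and "C \<ge> 0"
  shows "\<exists>K>0. \<forall>m. C ^ m \<le> K * a m"
proof -
  obtain N where N: "C < a (Suc N) / a N" using unbounded by blast
  define K where "K = Max ((\<lambda>m. C ^ m / a m) ` {..N})"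
  have K: "C ^ m / a m \<le> K" for m
  proof (induction m)
    case 0
    show ?case unfolding K_def by (intro Max_ge finite_imageI imageI) simp_all
  next
    case (Suc m)
    show ?case
    proof (cases "Suc m \<le> N")
      case True
      then show ?thesis
        unfolding K_def by (intro Max_ge finite_imageI imageI) simp_all
    next
      case False
      then have "C \<le> a (Suc m) / a m" using N ratio_mono[of N m] by simp
      then have "C * (C ^ m / a (Suc m)) \<le> a (Suc m) / a m * (C ^ m / a (Suc m))"
        using pos[of "Suc m"] \<open>C \<ge> 0\<close> by (intro mult_right_mono) simp_all
      also have "\<dots> = C ^ m / a m"
        using pos[of "Suc m"] by simp
      finally show ?thesis using Suc.IH by simp
    qed
  qed
  moreover have "K > 0"
    using K[of 0] zero by simp
  ultimately show ?thesis
    using pos by (meson divide_le_eq)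
qed

text \<open>The \<open>m\<close>-th term accounts for the products in which exactly \<open>m\<close> factors are
  differentiated.\<close>
definition conv_majorant :: "real \<Rightarrow> nat \<Rightarrow> nat \<Rightarrow> real" where
  "conv_majorant c n k = (\<Sum>m\<le>n. real (n choose m) * (if m \<le> k then c ^ m / a m else 0))"

lemma conv_majorant_le:
  assumes "\<And>m. c ^ m \<le> K * a m" "K \<ge> 0"
  shows "conv_majorant c n k \<le> K * 2 ^ n"
proof -
  have "conv_majorant c n k \<le> (\<Sum>m\<le>n. real (n choose m) * K)"
    unfolding conv_majorant_def
    using assms pos by (intro sum_mono mult_left_mono) (auto simp: divide_le_eq)
  also have "\<dots> = real (\<Sum>m\<le>n. n choose m) * K"
    by (simp add: sum_distrib_right)
  also have "\<dots> = K * 2 ^ n"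
    by (simp add: choose_row_sum)
  finally show ?thesis .
qed

lemma conv_majorant_Suc:
  "conv_majorant c (Suc n) k = conv_majorant c n k
     + (\<Sum>m\<le>n. real (n choose m) * (if Suc m \<le> k then c ^ Suc m / a (Suc m) else 0))"
  unfolding conv_majorant_def by (rule sum_Suc_choose_mult)

lemma conv_majorant_shift_le:
  assumes "c \<ge> 0" "1 \<le> j" "j \<le> k"
  shows "c * (a j * a (k - j)) * conv_majorant c n (k - j)
           \<le> a k * (\<Sum>m\<le>n. real (n choose m) * (if Suc m \<le> k then c ^ Suc m / a (Suc m) else 0))"
  unfolding conv_majorant_def sum_distrib_left
proof (intro sum_mono)
  fix m
  have "c * (a j * a (k - j)) * (if m \<le> k - j then c ^ m / a m else 0)
          \<le> a k * (if Suc m \<le> k then c ^ Suc m / a (Suc m) else 0)"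
  proof (cases "m \<le> k - j")
    case True
    then have "a j * a (k - j) * a (Suc m) \<le> a k * a m"
      using assms by (intro mult_le_shift) simp_all
    then have "a j * a (k - j) / a m \<le> a k / a (Suc m)"
      using pos[of m] pos[of "Suc m"] by (simp add: field_simps)
    then have "c ^ Suc m * (a j * a (k - j) / a m) \<le> c ^ Suc m * (a k / a (Suc m))"
      using assms(1) by (intro mult_left_mono) simp_all
    moreover have "Suc m \<le> k" using True assms by linarith
    ultimately show ?thesis using True by (simp add: ac_simps)
  next
    case False
    then show ?thesis using assms(1) pos[of k] pos[of "Suc m"] by simp
  qed
  then have "real (n choose m) * (c * (a j * a (k - j)) * (if m \<le> k - j then c ^ m / a m else 0))
      \<le> real (n choose m) * (a k * (if Suc m \<le> k then c ^ Suc m / a (Suc m) else 0))"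
    by (rule mult_left_mono) simp
  then show "c * (a j * a (k - j)) * (real (n choose m) * (if m \<le> k - j then c ^ m / a m else 0))
          \<le> a k * (real (n choose m) * (if Suc m \<le> k then c ^ Suc m / a (Suc m) else 0))"
    by (simp only: mult.left_commute[of "real (n choose m)"])
qed

lemma conv_power_le_majorant:
  assumes "c \<ge> 0"
  shows "conv_power (\<lambda>j. if j = 0 then 1 else c * (fact j * a j)) n k
           \<le> 2 ^ k * (fact k * a k) * conv_majorant c n k"
proof (induction n arbitrary: k)
  case 0
  show ?case using pos[of k] by (simp add: conv_majorant_def zero)
next
  case (Suc n)
  let ?G = "\<lambda>j. if j = 0 then 1 else c * (fact j * a j)"
  let ?T = "conv_power ?G n"
  define R' where "R' = (\<Sum>m\<le>n. real (n choose m) * (if Suc m \<le> k then c ^ Suc m / a (Suc m) else 0))"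
  have "R' \<ge> 0"
    unfolding R'_def using assms pos by (intro sum_nonneg mult_nonneg_nonneg) (auto intro: divide_nonneg_pos)
  have term_le: "real (k choose j) * ?G j * ?T (k - j) \<le> 2 ^ (k - j) * (fact k * a k * R')"
    if "1 \<le> j" "j \<le> k" for j
  proof -
    have "real (k choose j) * ?G j * ?T (k - j)
        \<le> real (k choose j) * ?G j * (2 ^ (k - j) * (fact (k - j) * a (k - j)) * conv_majorant c n (k - j))"
      using Suc.IH[of "k - j"] that assms pos[of j] by (intro mult_left_mono) simp_all
    also have "\<dots> = 2 ^ (k - j) * (real (k choose j) * fact j * fact (k - j))
                     * (c * (a j * a (k - j)) * conv_majorant c n (k - j))"
      using that by (simp add: ac_simps)
    also have "\<dots> \<le> 2 ^ (k - j) * fact k * (a k * R')"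
      unfolding R'_def of_nat_choose_mult_fact[OF \<open>j \<le> k\<close>]
      using conv_majorant_shift_le[OF assms that] by (intro mult_left_mono) simp_all
    finally show ?thesis by (simp add: ac_simps)
  qed
  have "(\<Sum>i<k. real (k choose Suc i) * ?G (Suc i) * ?T (k - Suc i))
               \<le> (\<Sum>i<k. 2 ^ (k - Suc i) * (fact k * a k * R'))"
    by (intro sum_mono term_le) simp_all
  also have "\<dots> = (2 ^ k - 1) * (fact k * a k * R')"
    by (simp add: sum_distrib_right[symmetric] sum.nat_diff_reindex[of "\<lambda>i. (2::real) ^ i"] sum_gp_strict)
  also have "\<dots> \<le> 2 ^ k * (fact k * a k * R')"
    using \<open>R' \<ge> 0\<close> pos[of k] by (intro mult_right_mono) simp_all
  finally have "(\<Sum>i<k. real (k choose Suc i) * ?G (Suc i) * ?T (k - Suc i)) \<le> 2 ^ k * (fact k * a k * R')" .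
  moreover have "conv_power ?G (Suc n) k = ?T k + (\<Sum>i<k. real (k choose Suc i) * ?G (Suc i) * ?T (k - Suc i))"
    by (simp add: binom_conv_def sum.atMost_shift del: of_nat_Suc)
  moreover have "conv_majorant c (Suc n) k = conv_majorant c n k + R'"
    by (simp add: conv_majorant_Suc R'_def)
  ultimately show ?case
    using Suc.IH[of k] by (simp add: distrib_left mult.assoc)
qed

end

section \<open>Derivatives of powers of a hypoelliptic symbol\<close>

lemma standing_log_convex_weight:
  assumes "standing M A \<rho>"
  shows "log_convex_weight (\<lambda>p. A p / fact p)"
proof
  from assms have A: "\<And>p. A p > 0" "A 0 = 1" "A 1 = 1" "cond_M4 A"
    by (simp_all add: standing_def)
  show "A p / fact p > 0" for p using A(1)[of p] by simp
  show "A 0 / fact 0 = 1" "A 1 / fact 1 = 1" using A(2,3) by simp_all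
  show "(A (Suc p) / fact (Suc p))\<^sup>2 \<le> A p / fact p * (A (Suc (Suc p)) / fact (Suc (Suc p)))" for p
    using A(4) unfolding cond_M4_def by (metis Suc_eq_plus1 diff_Suc_1 le_add2)
qed

lemma standing_weight_mult_le:
  assumes "standing M A \<rho>"
  shows "A p * A q \<le> A (p + q)"
proof -
  interpret log_convex_weight "\<lambda>p. A p / fact p"
    using standing_log_convex_weight[OF assms] .
  have "fact p * fact q \<le> (fact (p + q) :: real)"
    by (metis dvd_imp_le fact_fact_dvd_fact fact_gt_zero of_nat_fact of_nat_le_iff of_nat_mult)
  moreover have "A p / fact p * (A q / fact q) \<le> A (p + q) / fact (p + q)"
    by (rule mult_le)
  ultimately have "fact p * fact q * (A p / fact p * (A q / fact q)) \<le> fact (p + q) * (A (p + q) / fact (p + q))"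
    using less_imp_le[OF mult_pos_pos[OF pos[of p] pos[of q]]] by (intro mult_mono) simp_all
  then show ?thesis by simp
qed

lemma standing_dominates_geometric:
  assumes "standing M A \<rho>" and "C \<ge> 0"
  shows "\<exists>K>0. \<forall>m. C ^ m \<le> K * (A m / fact m)"
proof -
  interpret log_convex_weight "\<lambda>p. A p / fact p"
    using standing_log_convex_weight[OF assms(1)] .
  have "summable (\<lambda>k. A k / A (k + 1))"
    using assms(1) by (simp add: standing_def cond_M3'_def)
  moreover have "A k / A (k + 1) = A k / fact k / (real (Suc k) * (A (Suc k) / fact (Suc k)))" for k
    using pos[of k] by (simp add: field_simps del: of_nat_Suc)
  ultimately have "summable (\<lambda>k. A k / fact k / (real (Suc k) * (A (Suc k) / fact (Suc k))))"
    by simp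
  then show ?thesis
    using dominates_geometric[OF ratio_unbounded assms(2)] by blast
qed

lemma jb_pos: "jb w > 0"
  unfolding jb_def by (simp add: add_pos_nonneg)

definition hypo_ii_bound ::
    "(nat \<Rightarrow> real) \<Rightarrow> real \<Rightarrow> real \<Rightarrow> 'd::finite phase_fun \<Rightarrow> real \<Rightarrow> real \<Rightarrow> bool" where
  "hypo_ii_bound A \<rho> B b h C \<longleftrightarrow> (\<forall>(\<alpha>::'d \<Rightarrow> nat) (\<beta>::'d \<Rightarrow> nat) w. w \<notin> Qset B \<longrightarrow>
     norm (Dm (case_sum \<beta> \<alpha>) b w) \<le>
       C * h ^ (mabs \<alpha> + mabs \<beta>) * norm (b w) * A (mabs \<alpha>) * A (mabs \<beta>)
         * jb w powr (- \<rho> * real (mabs \<alpha> + mabs \<beta>)))"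

definition power_bound ::
    "(nat \<Rightarrow> real) \<Rightarrow> real \<Rightarrow> real \<Rightarrow> 'd::finite phase_fun \<Rightarrow> real \<Rightarrow> real \<Rightarrow> bool" where
  "power_bound A \<rho> B b h C \<longleftrightarrow> (\<forall>(\<gamma>::('d + 'd) \<Rightarrow> nat) n w. w \<notin> Qset B \<longrightarrow>
     norm (Dm \<gamma> (\<lambda>v. b v ^ n) w) \<le>
       C * 2 ^ n * h ^ mabs \<gamma> * A (mabs \<gamma>) * jb w powr (- \<rho> * real (mabs \<gamma>)) * norm (b w) ^ n)"

lemma norm_dlist_le_of_hypo_ii_bound:
  assumes "smooth b" "hypo_ii_bound A \<rho> B b h C" "w \<notin> Qset B" "h \<ge> 0"
    and A_pos: "\<And>p. A p > 0" and A_mult: "\<And>p q. A p * A q \<le> A (p + q)"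
  shows "norm (dlist js b w) \<le> norm (b w) * (h * jb w powr - \<rho>) ^ length js
           * (if length js = 0 then 1 else max C 1 * A (length js))"
proof (cases "js = []")
  case False
  define \<gamma> where "\<gamma> = count (mset js)"
  define \<alpha> where "\<alpha> = (\<lambda>i. \<gamma> (Inr i))"
  define \<beta> where "\<beta> = (\<lambda>i. \<gamma> (Inl i))"
  have \<gamma>: "case_sum \<beta> \<alpha> = \<gamma>" unfolding \<alpha>_def \<beta>_def by (rule ext) (simp split: sum.split)
  have L: "mabs \<alpha> + mabs \<beta> = length js"
    using mabs_case_sum[of \<beta> \<alpha>] mabs_count_mset[of js] by (simp add: \<gamma> \<gamma>_def)
  let ?X = "h ^ length js * norm (b w) * jb w powr (- \<rho> * real (length js))"
  have "?X \<ge> 0" using \<open>h \<ge> 0\<close> by simp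
  have "norm (dlist js b w) = norm (Dm (case_sum \<beta> \<alpha>) b w)"
    using norm_Dm_count_mset[OF assms(1)] by (simp add: \<gamma> \<gamma>_def)
  also have "\<dots> \<le> C * h ^ (mabs \<alpha> + mabs \<beta>) * norm (b w) * A (mabs \<alpha>) * A (mabs \<beta>)
                      * jb w powr (- \<rho> * real (mabs \<alpha> + mabs \<beta>))"
    using assms(2,3) unfolding hypo_ii_bound_def by blast
  also have "\<dots> = C * ?X * (A (mabs \<alpha>) * A (mabs \<beta>))"
    by (simp only: L ac_simps)
  also have "\<dots> \<le> max C 1 * ?X * A (length js)"
    using A_mult[of "mabs \<alpha>" "mabs \<beta>"] A_pos \<open>?X \<ge> 0\<close> L
    by (intro mult_mono mult_right_mono) (simp_all add: less_imp_le)
  also have "\<dots> = norm (b w) * (h * jb w powr - \<rho>) ^ length js * (max C 1 * A (length js))"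
    using jb_pos[of w] by (simp add: power_mult_distrib powr_power ac_simps)
  finally show ?thesis using False by simp
qed simp

lemma standing_conv_power_le:
  assumes "standing M A \<rho>" "c \<ge> 0"
  obtains K where "K > 0"
    "\<And>n k. conv_power (\<lambda>j. if j = 0 then 1 else c * A j) n k \<le> K * 2 ^ n * 2 ^ k * A k"
proof -
  interpret log_convex_weight "\<lambda>p. A p / fact p"
    using standing_log_convex_weight[OF assms(1)] .
  obtain K where "K > 0" and K: "\<And>m. c ^ m \<le> K * (A m / fact m)"
    using standing_dominates_geometric[OF assms] by blast
  have "conv_power (\<lambda>j. if j = 0 then 1 else c * A j) n k \<le> K * 2 ^ n * 2 ^ k * A k" for n k
  proof -
    have "(\<lambda>j. if j = 0 then 1 else c * (fact j * (A j / fact j))) = (\<lambda>j. if j = 0 then 1 else c * A j)"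
      by (simp add: fun_eq_iff)
    then have "conv_power (\<lambda>j. if j = 0 then 1 else c * A j) n k \<le> 2 ^ k * A k * conv_majorant c n k"
      using conv_power_le_majorant[OF assms(2), of n k] by simp
    also have "\<dots> \<le> 2 ^ k * A k * (K * 2 ^ n)"
      using conv_majorant_le[OF K] \<open>K > 0\<close> pos[of k] by (intro mult_left_mono) (simp_all add: zero_less_divide_iff)
    finally show ?thesis by (simp add: ac_simps)
  qed
  with \<open>K > 0\<close> show ?thesis by (rule that)
qed

lemma power_bound_of_hypo_ii_bound:
  fixes b :: "'d::finite phase_fun"
  assumes "standing M A \<rho>" "smooth b" "h > 0" "hypo_ii_bound A \<rho> B b h C"
  shows "\<exists>K>0. power_bound A \<rho> B b (2 * h) K"
proof -
  let ?G = "\<lambda>j. if j = 0 then 1 else max C 1 * A j"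
  have "max C 1 \<ge> 0" by simp
  then obtain K where "K > 0" and K: "\<And>n k. conv_power ?G n k \<le> K * 2 ^ n * 2 ^ k * A k"
    using standing_conv_power_le[OF assms(1)] by blast
  have A_pos: "\<And>p. A p > 0" using assms(1) by (simp add: standing_def)
  have "power_bound A \<rho> B b (2 * h) K"
    unfolding power_bound_def
  proof (intro allI impI)
    fix \<gamma> :: "'d + 'd \<Rightarrow> nat" and n and w :: "(real^'d) \<times> (real^'d)"
    assume w: "w \<notin> Qset B"
    let ?L = "mabs \<gamma>" and ?y = "h * jb w powr - \<rho>"
    have "norm (Dm \<gamma> (\<lambda>v. b v ^ n) w) = norm (dlist (dirs \<gamma>) (\<lambda>v. b v ^ n) w)"
      by (rule norm_Dm)
    also have "\<dots> \<le> conv_power (\<lambda>j. norm (b w) * ?y ^ j * ?G j) n ?L"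
      using norm_dlist_power_le[OF assms(2) norm_dlist_le_of_hypo_ii_bound[OF assms(2,4) w
          less_imp_le[OF assms(3)] A_pos standing_weight_mult_le[OF assms(1)]], of "dirs \<gamma>" n]
      by (simp only: length_dirs)
    also have "\<dots> = norm (b w) ^ n * ?y ^ ?L * conv_power ?G n ?L"
      by (rule conv_power_scale)
    also have "\<dots> \<le> norm (b w) ^ n * ?y ^ ?L * (K * 2 ^ n * 2 ^ ?L * A ?L)"
      using K assms(3) by (intro mult_left_mono) simp_all
    also have "\<dots> = K * 2 ^ n * (2 * h) ^ ?L * A ?L * jb w powr (- \<rho> * real ?L) * norm (b w) ^ n"
    proof -
      have "?y ^ ?L = h ^ ?L * jb w powr (- \<rho> * real ?L)"
        using jb_pos[of w] by (simp add: power_mult_distrib powr_power mult.commute)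
      then show ?thesis by (simp only: power_mult_distrib mult_ac)
    qed
    finally show "norm (Dm \<gamma> (\<lambda>v. b v ^ n) w)
        \<le> K * 2 ^ n * (2 * h) ^ ?L * A ?L * jb w powr (- \<rho> * real ?L) * norm (b w) ^ n" .
  qed
  with \<open>K > 0\<close> show ?thesis by blast
qed

lemma hypo_ii_eq:
  "hypo_ii u A \<rho> B b \<longleftrightarrow>
     (case u of Beurling \<Rightarrow> \<forall>h>0. \<exists>C. hypo_ii_bound A \<rho> B b h C
              | Roumieu \<Rightarrow> \<exists>h>0. \<exists>C. hypo_ii_bound A \<rho> B b h C)"
  unfolding hypo_ii_def hypo_ii_bound_def Let_def by simp

lemma power_bound_Beurling:
  assumes "standing M A \<rho>" "smooth b" "\<forall>h>0. \<exists>C. hypo_ii_bound A \<rho> B b h C" "h > 0"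
  shows "\<exists>C>0. power_bound A \<rho> B b h C"
proof -
  from assms(3,4) obtain C where "hypo_ii_bound A \<rho> B b (h / 2) C"
    by (meson half_gt_zero)
  from power_bound_of_hypo_ii_bound[OF assms(1,2) _ this] \<open>h > 0\<close> show ?thesis by simp
qed

lemma power_bound_Roumieu:
  assumes "standing M A \<rho>" "smooth b" "\<exists>h>0. \<exists>C. hypo_ii_bound A \<rho> B b h C"
  shows "\<exists>h>0. \<exists>C>0. power_bound A \<rho> B b h C"
proof -
  from assms(3) obtain h C where "h > 0" "hypo_ii_bound A \<rho> B b h C" by blast
  with power_bound_of_hypo_ii_bound[OF assms(1,2)] show ?thesis
    by (metis mult_pos_pos zero_less_numeral)
qed

theorem corollary7p7:
  fixes u :: ultra and M A :: "nat \<Rightarrow> real" and \<rho> B :: real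
    and b :: "(real^'d::finite) \<times> (real^'d) \<Rightarrow> complex"
  assumes "standing M A \<rho>"
    and "Gamma_space u M A \<rho> b"
    and "hypoelliptic u M A \<rho> B b"
  shows "(let est = (\<lambda>h C. \<forall>(\<gamma>::('d + 'd) \<Rightarrow> nat) (n::nat) w. w \<notin> Qset B \<longrightarrow>
              norm (Dm \<gamma> (\<lambda>v. b v ^ n) w) \<le>
                C * 2 ^ n * h ^ mabs \<gamma> * A (mabs \<gamma>) * jb w powr (- \<rho> * real (mabs \<gamma>))
                  * norm (b w) ^ n)
         in case u of
              Beurling \<Rightarrow> (\<forall>h>0. \<exists>C>0. est h C)
            | Roumieu \<Rightarrow> (\<exists>h>0. \<exists>C>0. est h C))"
proof -
  have "smooth b" using assms(2) by (simp add: Gamma_space_def)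
  moreover have "hypo_ii u A \<rho> B b" using assms(3) by (simp add: hypoelliptic_def)
  ultimately have "case u of Beurling \<Rightarrow> \<forall>h>0. \<exists>C>0. power_bound A \<rho> B b h C
                           | Roumieu \<Rightarrow> \<exists>h>0. \<exists>C>0. power_bound A \<rho> B b h C"
    by (cases u)
      (auto simp: hypo_ii_eq intro: power_bound_Beurling[OF assms(1)] power_bound_Roumieu[OF assms(1)])
  then show ?thesis by (simp only: Let_def power_bound_def)
qed

end
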